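(* Let $H=(V,E,w)$ be a hypergraph in which every vertex has positive degree and every hyperedge has rank at least $2$, and let $G$ be its clique reduction. If $f$ is an eigenvector of $D_G^{-1}J_G$ corresponding to its smallest eigenvalue $\lambda_1(D_G^{-1}J_G)$, then $$\frac{f^\top J_H f}{f^\top D_H f}\le\lambda_1(D_G^{-1}J_G),$$ and the inequality is strict if $\min_{e\in E}\mathrm{rank}(e)>2$.
   Context: A hypergraph $H=(V,E,w)$ has vertex set $V$ with $|V|=n$, hyperedges $E$ (subsets of $V$), weights $w:E\to\mathbb{R}_{>0}$; $\mathrm{rank}(e)=|e|$, $\deg(v)=\sum_{e\ni v}w(e)$, $D_H=\mathrm{diag}(\deg(v))$. For $f\in\mathbb{R}^n$, $e\in E$: $\Delta_f(e)=\max_{u\in e}f(u)+\min_{v\in e}f(v)$, $S_f(e)=\{v\in e:f(v)=\max_{u\in e}f(u)\}$, $I_f(e)=\{v\in e:f(v)=\min_{u\in e}f(u)\}$. Operator $J_H$: for $f$, let $r\in\mathbb{R}^n$ be the unique vector for which there are numbers $r_e(v)$ with $r(v)=\sum_e r_e(v)$, $r_e(v)=0$ unless $v\in S_f(e)\cup I_f(e)$, and: (1) $\sum_{v\in S_f(e)}\deg(v)r_e(v)=\sum_{v\in I_f(e)}\deg(v)r_e(v)=-w(e)\Delta_f(e)$ for all $e$; (2a) if $|r_e(u)|>0$, $u\in S_f(e)$: when $\Delta_f(e)>0$, $r(u)=\max_{v\in S_f(e)}r(v)$, when $\Delta_f(e)<0$, $r(u)=r(v)$ for all $v\in S_f(e)$;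 (2b) if $|r_e(u)|>0$, $u\in I_f(e)$: when $\Delta_f(e)<0$, $r(u)=\min_{v\in I_f(e)}r(v)$, when $\Delta_f(e)>0$, $r(u)=r(v)$ for all $v\in I_f(e)$. Then $J_H f:=-D_H r$. (One has $f^\top J_H f=\sum_e w(e)\Delta_f(e)^2$.) Clique reduction $G$: the graph on $V$ in which, for each hyperedge $e$ and each pair of distinct $u,v\in e$, weight $w(e)/(\mathrm{rank}(e)-1)$ is added to edge $\{u,v\}$; $D_G$, $A_G$ are its degree and weighted adjacency matrices and $J_G=D_G+A_G$. *)

theory Defs
  imports Main "HOL-Analysis.Analysis"
begin

text \<open>Hypergraph H = (V,E,w): V a finite vertex set, E a finite set of hyperedges (subsets of V),
  w a weight function on hyperedges. Vectors f in R^n are functions on V.\<close>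

definition hdeg :: "'a set set \<Rightarrow> ('a set \<Rightarrow> real) \<Rightarrow> 'a \<Rightarrow> real" where
  "hdeg E w v = (\<Sum>e\<in>{e\<in>E. v \<in> e}. w e)"

definition hDelta :: "('a \<Rightarrow> real) \<Rightarrow> 'a set \<Rightarrow> real" where
  "hDelta f e = Max (f ` e) + Min (f ` e)"

text \<open>f^T J_H f, via the identity f^T J_H f = sum_e w(e) Delta_f(e)^2 stated in the context.\<close>
definition hyp_JH_quad :: "'a set set \<Rightarrow> ('a set \<Rightarrow> real) \<Rightarrow> ('a \<Rightarrow> real) \<Rightarrow> real" where
  "hyp_JH_quad E w f = (\<Sum>e\<in>E. w e * (hDelta f e)\<^sup>2)"

definition hyp_DH_quad :: "'a set \<Rightarrow> 'a set set \<Rightarrow> ('a set \<Rightarrow> real) \<Rightarrow> ('a \<Rightarrow> real) \<Rightarrow> real" where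
  "hyp_DH_quad V E w f = (\<Sum>v\<in>V. hdeg E w v * (f v)\<^sup>2)"

definition clique_adj :: "'a set set \<Rightarrow> ('a set \<Rightarrow> real) \<Rightarrow> 'a \<Rightarrow> 'a \<Rightarrow> real" where
  "clique_adj E w u v =
     (if u = v then 0 else (\<Sum>e\<in>{e\<in>E. u \<in> e \<and> v \<in> e}. w e / (real (card e) - 1)))"

definition clique_deg :: "'a set \<Rightarrow> 'a set set \<Rightarrow> ('a set \<Rightarrow> real) \<Rightarrow> 'a \<Rightarrow> real" where
  "clique_deg V E w u = (\<Sum>v\<in>V. clique_adj E w u v)"

definition clique_J :: "'a set \<Rightarrow> 'a set set \<Rightarrow> ('a set \<Rightarrow> real) \<Rightarrow> ('a \<Rightarrow> real) \<Rightarrow> 'a \<Rightarrow> real" where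
  "clique_J V E w f u = clique_deg V E w u * f u + (\<Sum>v\<in>V. clique_adj E w u v * f v)"

definition clique_DinvJ :: "'a set \<Rightarrow> 'a set set \<Rightarrow> ('a set \<Rightarrow> real) \<Rightarrow> ('a \<Rightarrow> real) \<Rightarrow> 'a \<Rightarrow> real" where
  "clique_DinvJ V E w f u = clique_J V E w f u / clique_deg V E w u"

definition is_eigvec :: "'a set \<Rightarrow> (('a \<Rightarrow> real) \<Rightarrow> 'a \<Rightarrow> real) \<Rightarrow> real \<Rightarrow> ('a \<Rightarrow> real) \<Rightarrow> bool" where
  "is_eigvec V M lam f \<longleftrightarrow> (\<exists>v\<in>V. f v \<noteq> 0) \<and> (\<forall>u\<in>V. M f u = lam * f u)"

end

theory Submission
  imports Defs
begin

(* First D_G = D_H: a hyperedge e adds (rank e - 1) * w(e)/(rank e - 1)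
   to the clique degree of each of its vertices. The quadratic form of J_G splits over hyperedges
   as sum_e w(e)/(rank e - 1) times the sum of (f u + f v)^2 over the pairs {u,v} in e. Taking
   a maximiser a and a minimiser b of f on e, the pair {a,b} contributes Delta_f(e)^2 and every
   other vertex v contributes (f a + f v)^2 + (f b + f v)^2 = Delta_f(e)^2 + 4 f(v)^2
   + 2 (f a - f v)(f v - f b) >= Delta_f(e)^2, whence f^T J_H f <= f^T J_G f = lam1 f^T D_H f.
   If every rank exceeds 2, equality forces f u f v = 0 for any two vertices of a common
   hyperedge, so J_G f = D_G f at a vertex where f does not vanish and lam1 = 1. But the minimum
   of the Rayleigh quotient f^T J_G f / f^T D_G f is an eigenvalue of D_G^-1 J_G, and testing it
   on 1_a - 1_b for two vertices a, b of a hyperedge shows that it is below 1. *)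

section \<open>Quadratic forms of symmetric kernels\<close>

definition kernel_op :: "'a set \<Rightarrow> ('a \<Rightarrow> 'a \<Rightarrow> real) \<Rightarrow> ('a \<Rightarrow> real) \<Rightarrow> 'a \<Rightarrow> real" where
  "kernel_op V K h u = (\<Sum>v\<in>V. K u v * h v)"

definition quad_form :: "'a set \<Rightarrow> ('a \<Rightarrow> 'a \<Rightarrow> real) \<Rightarrow> ('a \<Rightarrow> real) \<Rightarrow> real" where
  "quad_form V K h = (\<Sum>u\<in>V. h u * kernel_op V K h u)"

lemma if_1_0_mult:
  "(if P then 1 else 0) * (x::real) = (if P then x else 0)"
  "x * (if P then 1 else 0) = (if P then x else 0)"
  by simp_all

lemma kernel_op_delta:
  assumes "finite V" "a \<in> V"
  shows "kernel_op V K (\<lambda>x. if x = a then 1 else 0) u = K u a"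
  using assms by (simp add: kernel_op_def if_1_0_mult)

lemma quad_form_delta:
  assumes "finite V" "a \<in> V"
  shows "quad_form V K (\<lambda>x. if x = a then 1 else 0) = K a a"
  using assms by (simp add: quad_form_def kernel_op_delta if_1_0_mult)

lemma quad_form_cong:
  "(\<And>v. v \<in> V \<Longrightarrow> g v = h v) \<Longrightarrow> quad_form V K g = quad_form V K h"
  by (simp add: quad_form_def kernel_op_def)

lemma quad_form_scale: "quad_form V K (\<lambda>x. c * h x) = c\<^sup>2 * quad_form V K h"
  by (simp add: quad_form_def kernel_op_def sum_distrib_left power2_eq_square algebra_simps)

lemma sum_mult_kernel_op_swap:
  assumes "\<forall>u\<in>V. \<forall>v\<in>V. K u v = K v u"
  shows "(\<Sum>u\<in>V. g u * kernel_op V K h u) = (\<Sum>u\<in>V. h u * kernel_op V K g u)"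
proof -
  have "(\<Sum>u\<in>V. g u * kernel_op V K h u) = (\<Sum>u\<in>V. \<Sum>v\<in>V. K v u * g u * h v)"
    using assms by (simp add: kernel_op_def sum_distrib_left mult_ac)
  also have "\<dots> = (\<Sum>u\<in>V. h u * kernel_op V K g u)"
    by (subst sum.swap) (simp add: kernel_op_def sum_distrib_left mult_ac)
  finally show ?thesis .
qed

lemma quad_form_add_scaled:
  assumes "\<forall>u\<in>V. \<forall>v\<in>V. K u v = K v u"
  shows "quad_form V K (\<lambda>x. g x + t * h x)
       = quad_form V K g + 2 * t * (\<Sum>u\<in>V. h u * kernel_op V K g u) + t\<^sup>2 * quad_form V K h"
proof -
  have "kernel_op V K (\<lambda>x. g x + t * h x) u = kernel_op V K g u + t * kernel_op V K h u" for u
    by (simp add: kernel_op_def sum.distrib sum_distrib_left algebra_simps)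
  then have "quad_form V K (\<lambda>x. g x + t * h x)
      = quad_form V K g + t * (\<Sum>u\<in>V. g u * kernel_op V K h u)
        + t * (\<Sum>u\<in>V. h u * kernel_op V K g u) + t\<^sup>2 * quad_form V K h"
    by (simp add: quad_form_def sum.distrib sum_distrib_left power2_eq_square algebra_simps)
  then show ?thesis
    using sum_mult_kernel_op_swap[OF assms, of g h] by simp
qed

lemma quad_form_delta_diff:
  assumes "finite V" "a \<in> V" "b \<in> V" "\<forall>u\<in>V. \<forall>v\<in>V. K u v = K v u"
  shows "quad_form V K (\<lambda>x. (if x = a then 1 else 0) - (if x = b then 1 else 0))
       = K a a + K b b - 2 * K a b"
proof -
  have "quad_form V K (\<lambda>x. (if x = a then 1 else 0) - (if x = b then 1 else 0))
      = quad_form V K (\<lambda>x. (if x = a then 1 else 0) + (- 1) * (if x = b then 1 else 0))"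
    by simp
  also have "\<dots> = K a a + K b b - 2 * K a b"
    unfolding quad_form_add_scaled[OF assms(4)]
    using assms by (simp add: quad_form_delta kernel_op_delta if_1_0_mult)
  finally show ?thesis .
qed

lemma weighted_sum_sq_delta_diff:
  assumes "finite V" "a \<in> V" "b \<in> V" "a \<noteq> b"
  shows "(\<Sum>v\<in>V. d v * ((if v = a then 1 else 0) - (if v = b then 1 else 0))\<^sup>2) = d a + (d b :: real)"
proof -
  have "(\<Sum>v\<in>V. d v * ((if v = a then 1 else 0) - (if v = b then 1 else 0))\<^sup>2)
      = (\<Sum>v\<in>V. (if v = a then d a else 0) + (if v = b then d b else 0))"
    using assms(4) by (intro sum.cong) auto
  then show ?thesis
    using assms(1-3) by (simp add: sum.distrib)
qed

lemma linear_coeff_eq_0_if_nonneg_quadratic: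
  fixes a b :: real
  assumes "\<forall>t. 0 \<le> a * t\<^sup>2 + b * t"
  shows "b = 0"
proof (rule ccontr)
  assume "b \<noteq> 0"
  define c where "c = \<bar>a\<bar> + 1"
  have "c > 0" "a - c < 0" unfolding c_def by auto
  have "a * (- b / c)\<^sup>2 + b * (- b / c) = b\<^sup>2 * (a - c) / c\<^sup>2"
    using \<open>c > 0\<close> by (simp add: field_simps power2_eq_square)
  also have "\<dots> < 0"
    using \<open>b \<noteq> 0\<close> \<open>c > 0\<close> \<open>a - c < 0\<close> by (intro divide_neg_pos mult_pos_neg) auto
  finally show False using assms by (meson not_le)
qed

lemma psd_quad_form_eq_0_imp_kernel_op_eq_0:
  assumes "finite V" "\<forall>u\<in>V. \<forall>v\<in>V. M u v = M v u"
    and psd: "\<forall>h. 0 \<le> quad_form V M h" and "quad_form V M g = 0" and "u \<in> V"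
  shows "kernel_op V M g u = 0"
proof -
  let ?\<delta> = "\<lambda>x. if x = u then 1 else (0::real)"
  have "0 \<le> M u u * t\<^sup>2 + 2 * kernel_op V M g u * t" for t
    using psd[rule_format, of "\<lambda>x. g x + t * ?\<delta> x"] assms
    unfolding quad_form_add_scaled[OF assms(2)]
    by (simp add: quad_form_delta if_1_0_mult algebra_simps)
  then show ?thesis
    using linear_coeff_eq_0_if_nonneg_quadratic by fastforce
qed

lemma continuous_on_quad_form [continuous_intros]:
  "continuous_on S (\<lambda>g::'a \<Rightarrow> real. quad_form V K g)"
proof -
  have coord: "continuous_on S (\<lambda>g::'a \<Rightarrow> real. g x)" for x
    by (rule continuous_on_subset[OF continuous_on_product_coordinates]) simp
  show ?thesis
    unfolding quad_form_def kernel_op_def by (intro continuous_intros coord)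
qed

lemma weighted_sum_sq_pos:
  fixes d h :: "'a \<Rightarrow> real"
  assumes "finite V" "\<forall>v\<in>V. 0 < d v" "\<exists>v\<in>V. h v \<noteq> 0"
  shows "0 < (\<Sum>v\<in>V. d v * (h v)\<^sup>2)"
proof -
  obtain v where "v \<in> V" "h v \<noteq> 0" using assms(3) by blast
  then show ?thesis
    using assms(1,2) by (intro sum_pos2[of V v]) (auto intro: mult_nonneg_nonneg less_imp_le)
qed

definition weighted_sphere :: "'a set \<Rightarrow> ('a \<Rightarrow> real) \<Rightarrow> ('a \<Rightarrow> real) set" where
  "weighted_sphere V d = {g. (\<forall>x. x \<notin> V \<longrightarrow> g x = 0) \<and> (\<Sum>v\<in>V. d v * (g v)\<^sup>2) = 1}"

lemma compact_weighted_sphere: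
  assumes "finite V" "\<forall>v\<in>V. 0 < d v"
  shows "compact (weighted_sphere V d)"
proof -
  define B where "B = PiE UNIV (\<lambda>v. if v \<in> V then {- sqrt (1 / d v) .. sqrt (1 / d v)} else {0::real})"
  have "compactin (product_topology (\<lambda>i. euclidean) UNIV) B"
    unfolding B_def compactin_PiE by auto
  then have "compact B" by (simp add: euclidean_product_topology)
  moreover have "closed {g::'a \<Rightarrow> real. (\<Sum>v\<in>V. d v * (g v)\<^sup>2) = 1}"
    by (intro closed_Collect_eq continuous_intros continuous_on_product_coordinates)
  moreover have "weighted_sphere V d = B \<inter> {g. (\<Sum>v\<in>V. d v * (g v)\<^sup>2) = 1}"
  proof -
    have "g v \<in> {- sqrt (1 / d v) .. sqrt (1 / d v)}"
      if "(\<Sum>v\<in>V. d v * (g v)\<^sup>2) = 1" "v \<in> V" for g v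
    proof -
      have "d v * (g v)\<^sup>2 \<le> 1"
        using that assms member_le_sum[of v V "\<lambda>v. d v * (g v)\<^sup>2"] by (simp add: less_imp_le)
      then have "(g v)\<^sup>2 \<le> 1 / d v" and "(- g v)\<^sup>2 \<le> 1 / d v"
        using assms that by (simp_all add: field_simps mult.commute)
      then have "g v \<le> sqrt (1 / d v)" "- g v \<le> sqrt (1 / d v)"
        by (simp_all only: real_le_rsqrt)
      then show ?thesis by simp
    qed
    then show ?thesis
      unfolding weighted_sphere_def B_def by (auto simp: PiE_iff) (metis singletonD)
  qed
  ultimately show ?thesis
    by (simp add: compact_Int_closed)
qed

lemma weighted_sphere_normalize:
  assumes "\<forall>v\<in>V. 0 < d v" and pos: "0 < (\<Sum>v\<in>V. d v * (h v)\<^sup>2)"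
  shows "\<exists>h'\<in>weighted_sphere V d. quad_form V K h = (\<Sum>v\<in>V. d v * (h v)\<^sup>2) * quad_form V K h'"
proof -
  define r where "r = sqrt (\<Sum>v\<in>V. d v * (h v)\<^sup>2)"
  have "r > 0" using pos unfolding r_def by simp
  define h' where "h' x = (if x \<in> V then h x / r else 0)" for x
  have "(\<Sum>v\<in>V. d v * (h' v)\<^sup>2) = (\<Sum>v\<in>V. d v * (h v)\<^sup>2) / r\<^sup>2"
    unfolding h'_def by (simp add: power_divide sum_divide_distrib)
  then have "h' \<in> weighted_sphere V d"
    using pos unfolding weighted_sphere_def r_def by (simp add: h'_def)
  moreover have "quad_form V K h' = (1 / r)\<^sup>2 * quad_form V K h"
  proof -
    have "quad_form V K h' = quad_form V K (\<lambda>x. (1 / r) * h x)"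
      by (rule quad_form_cong) (simp add: h'_def)
    then show ?thesis by (simp only: quad_form_scale)
  qed
  then have "quad_form V K h = r\<^sup>2 * quad_form V K h'"
    using \<open>r > 0\<close> by (simp add: power_divide)
  ultimately show ?thesis
    using pos unfolding r_def by auto
qed

lemma rayleigh_quotient_min_attained:
  fixes K :: "'a \<Rightarrow> 'a \<Rightarrow> real" and d :: "'a \<Rightarrow> real"
  assumes finV: "finite V" and "V \<noteq> {}" and dpos: "\<forall>v\<in>V. 0 < d v"
  obtains g where "(\<Sum>v\<in>V. d v * (g v)\<^sup>2) = 1"
    "\<forall>h. quad_form V K g * (\<Sum>v\<in>V. d v * (h v)\<^sup>2) \<le> quad_form V K h"
proof -
  obtain v0 where "v0 \<in> V" using \<open>V \<noteq> {}\<close> by blast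
  then have "0 < (\<Sum>v\<in>V. d v * ((if v = v0 then 1 else 0))\<^sup>2)"
    using finV dpos by (simp add: if_distrib[of power2] if_1_0_mult cong: if_cong)
  then have "weighted_sphere V d \<noteq> {}"
    using weighted_sphere_normalize[OF dpos, of "\<lambda>v. if v = v0 then 1 else 0"] by blast
  then obtain g where "g \<in> weighted_sphere V d"
    and gmin: "\<forall>h'\<in>weighted_sphere V d. quad_form V K g \<le> quad_form V K h'"
    using continuous_attains_inf[OF compact_weighted_sphere[OF finV dpos] _ continuous_on_quad_form]
    by blast
  have "quad_form V K g * (\<Sum>v\<in>V. d v * (h v)\<^sup>2) \<le> quad_form V K h" for h
  proof (cases "0 < (\<Sum>v\<in>V. d v * (h v)\<^sup>2)")
    case True
    then obtain h' where "h' \<in> weighted_sphere V d"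
      "quad_form V K h = (\<Sum>v\<in>V. d v * (h v)\<^sup>2) * quad_form V K h'"
      using weighted_sphere_normalize[OF dpos] by blast
    then show ?thesis using gmin True by (simp add: mult.commute)
  next
    case False
    then have "\<forall>v\<in>V. h v = 0"
      using weighted_sum_sq_pos[OF finV dpos] by blast
    then show ?thesis
      unfolding quad_form_def by simp
  qed
  then show ?thesis
    using that \<open>g \<in> weighted_sphere V d\<close> unfolding weighted_sphere_def by blast
qed

lemma symmetric_kernel_min_eigenpair:
  fixes K :: "'a \<Rightarrow> 'a \<Rightarrow> real" and d :: "'a \<Rightarrow> real"
  assumes finV: "finite V" and "V \<noteq> {}" and dpos: "\<forall>v\<in>V. 0 < d v"
    and sym: "\<forall>u\<in>V. \<forall>v\<in>V. K u v = K v u"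
  obtains \<mu> g where "\<exists>v\<in>V. g v \<noteq> 0" "\<forall>u\<in>V. kernel_op V K g u = \<mu> * (d u * g u)"
    "\<forall>h. \<mu> * (\<Sum>v\<in>V. d v * (h v)\<^sup>2) \<le> quad_form V K h"
proof -
  obtain g where g1: "(\<Sum>v\<in>V. d v * (g v)\<^sup>2) = 1"
    and min: "\<forall>h. quad_form V K g * (\<Sum>v\<in>V. d v * (h v)\<^sup>2) \<le> quad_form V K h"
    by (rule rayleigh_quotient_min_attained[OF finV \<open>V \<noteq> {}\<close> dpos])
  define \<mu> where "\<mu> = quad_form V K g"
  define M where "M u v = K u v - \<mu> * (if u = v then d u else 0)" for u v
  have M_op: "kernel_op V M h u = kernel_op V K h u - \<mu> * (d u * h u)" if "u \<in> V" for h u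
  proof -
    have "(\<Sum>v\<in>V. \<mu> * (if u = v then d u else 0) * h v) = (\<Sum>v\<in>V. if u = v then \<mu> * (d u * h v) else 0)"
      by (rule sum.cong) auto
    then show ?thesis
      using that finV by (simp add: M_def kernel_op_def sum_subtractf left_diff_distrib)
  qed
  have M_quad: "quad_form V M h = quad_form V K h - \<mu> * (\<Sum>v\<in>V. d v * (h v)\<^sup>2)" for h
    by (simp add: quad_form_def M_op sum_subtractf sum_distrib_left power2_eq_square algebra_simps)
  have "kernel_op V M g u = 0" if "u \<in> V" for u
  proof (rule psd_quad_form_eq_0_imp_kernel_op_eq_0[OF finV _ _ _ that])
    show "\<forall>u\<in>V. \<forall>v\<in>V. M u v = M v u" using sym by (simp add: M_def)
    show "\<forall>h. 0 \<le> quad_form V M h" using min by (simp add: M_quad \<mu>_def)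
    show "quad_form V M g = 0" using g1 by (simp add: M_quad \<mu>_def)
  qed
  then have "\<forall>u\<in>V. kernel_op V K g u = \<mu> * (d u * g u)"
    by (simp add: M_op)
  moreover have "\<exists>v\<in>V. g v \<noteq> 0"
    using g1 by (metis (no_types, lifting) mult_zero_right sum.neutral zero_neq_one zero_power2)
  ultimately show ?thesis
    using that min unfolding \<mu>_def by blast
qed

section \<open>The clique reduction\<close>

lemma clique_adj_sym: "clique_adj E w u v = clique_adj E w v u"
  unfolding clique_adj_def by (auto intro!: sum.cong)

lemma clique_adj_self [simp]: "clique_adj E w u u = 0"
  by (simp add: clique_adj_def)

lemma clique_adj_pos:
  assumes "finite E" "e \<in> E" "a \<in> e" "b \<in> e" "a \<noteq> b"
    and "\<forall>e\<in>E. 0 < w e" "\<forall>e\<in>E. 2 \<le> card e"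
  shows "0 < clique_adj E w a b"
proof -
  have "0 < w e' / (real (card e') - 1)" if "e' \<in> E" for e'
  proof -
    have "0 < w e'" "2 \<le> real (card e')" using that assms(6,7) by auto
    then show ?thesis by simp
  qed
  then show ?thesis
    unfolding clique_adj_def using assms(1-5)
    by (auto intro!: sum_pos2[of _ e] less_imp_le)
qed

lemma sum_clique_adj:
  assumes "finite V" "finite E" "\<forall>e\<in>E. e \<subseteq> V"
  shows "(\<Sum>v\<in>V. clique_adj E w u v * g v)
       = (\<Sum>e\<in>{e\<in>E. u \<in> e}. w e / (real (card e) - 1) * (\<Sum>v\<in>e - {u}. g v))"
proof -
  let ?c = "\<lambda>e. w e / (real (card e) - 1)"
  have "(\<Sum>v\<in>V. clique_adj E w u v * g v)
      = (\<Sum>v\<in>V. \<Sum>e\<in>{e\<in>E. u \<in> e \<and> v \<in> e - {u}}. ?c e * g v)"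
    unfolding clique_adj_def by (auto simp: sum_distrib_right intro!: sum.cong)
  also have "\<dots> = (\<Sum>e\<in>E. \<Sum>v\<in>{v\<in>V. u \<in> e \<and> v \<in> e - {u}}. ?c e * g v)"
    using assms(1,2) by (rule sum.swap_restrict)
  also have "\<dots> = (\<Sum>e\<in>E. if u \<in> e then ?c e * (\<Sum>v\<in>e - {u}. g v) else 0)"
  proof (rule sum.cong[OF refl])
    fix e assume "e \<in> E"
    then have "{v\<in>V. u \<in> e \<and> v \<in> e - {u}} = (if u \<in> e then e - {u} else {})"
      using assms(3) by auto
    then show "(\<Sum>v\<in>{v\<in>V. u \<in> e \<and> v \<in> e - {u}}. ?c e * g v)
        = (if u \<in> e then ?c e * (\<Sum>v\<in>e - {u}. g v) else 0)"
      by (simp add: sum_distrib_left)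
  qed
  also have "\<dots> = (\<Sum>e\<in>{e\<in>E. u \<in> e}. ?c e * (\<Sum>v\<in>e - {u}. g v))"
    using assms(2) by (rule sum.inter_filter[symmetric])
  finally show ?thesis .
qed

lemma clique_deg_eq_hdeg:
  assumes "finite V" "finite E" "\<forall>e\<in>E. e \<subseteq> V" "\<forall>e\<in>E. 2 \<le> card e"
  shows "clique_deg V E w u = hdeg E w u"
proof -
  have "clique_deg V E w u = (\<Sum>e\<in>{e\<in>E. u \<in> e}. w e / (real (card e) - 1) * real (card (e - {u})))"
    using sum_clique_adj[OF assms(1-3), of w u "\<lambda>_. 1"] by (simp add: clique_deg_def)
  also have "\<dots> = (\<Sum>e\<in>{e\<in>E. u \<in> e}. w e)"
  proof (rule sum.cong[OF refl])
    fix e assume "e \<in> {e\<in>E. u \<in> e}"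
    moreover from this have "finite e" using assms(1,3) finite_subset by blast
    ultimately have "real (card (e - {u})) = real (card e) - 1" "real (card e) - 1 \<noteq> 0"
      using assms(4) by (auto simp: of_nat_diff)
    then show "w e / (real (card e) - 1) * real (card (e - {u})) = w e" by simp
  qed
  finally show ?thesis unfolding hdeg_def .
qed

lemma sum_clique_adj_pairs:
  assumes "finite V" "finite E" "\<forall>e\<in>E. e \<subseteq> V"
  shows "(\<Sum>u\<in>V. \<Sum>v\<in>V. clique_adj E w u v * g u v)
       = (\<Sum>e\<in>E. w e / (real (card e) - 1) * (\<Sum>u\<in>e. \<Sum>v\<in>e - {u}. g u v))"
proof -
  have "(\<Sum>u\<in>V. \<Sum>v\<in>V. clique_adj E w u v * g u v)
      = (\<Sum>u\<in>V. \<Sum>e\<in>{e\<in>E. u \<in> e}. w e / (real (card e) - 1) * (\<Sum>v\<in>e - {u}. g u v))"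
    using sum_clique_adj[OF assms] by simp
  also have "\<dots> = (\<Sum>e\<in>E. \<Sum>u\<in>{u\<in>V. u \<in> e}. w e / (real (card e) - 1) * (\<Sum>v\<in>e - {u}. g u v))"
    using assms(1,2) by (rule sum.swap_restrict)
  also have "\<dots> = (\<Sum>e\<in>E. w e / (real (card e) - 1) * (\<Sum>u\<in>e. \<Sum>v\<in>e - {u}. g u v))"
  proof (rule sum.cong[OF refl])
    fix e assume "e \<in> E"
    then have "{u\<in>V. u \<in> e} = e" using assms(3) by auto
    then show "(\<Sum>u\<in>{u\<in>V. u \<in> e}. w e / (real (card e) - 1) * (\<Sum>v\<in>e - {u}. g u v))
        = w e / (real (card e) - 1) * (\<Sum>u\<in>e. \<Sum>v\<in>e - {u}. g u v)"
      by (simp add: sum_distrib_left)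
  qed
  finally show ?thesis .
qed

definition clique_energy :: "('a \<Rightarrow> real) \<Rightarrow> 'a set \<Rightarrow> real" where
  "clique_energy f e = (\<Sum>u\<in>e. \<Sum>v\<in>e - {u}. (f u + f v)\<^sup>2)"

lemma clique_quad_eq_energy:
  assumes "finite V" "finite E" "\<forall>e\<in>E. e \<subseteq> V"
  shows "(\<Sum>u\<in>V. f u * clique_J V E w f u)
       = (\<Sum>e\<in>E. w e / (real (card e) - 1) * clique_energy f e) / 2"
proof -
  let ?A = "clique_adj E w"
  have "clique_J V E w f u = (\<Sum>v\<in>V. ?A u v * (f u + f v))" for u
    unfolding clique_J_def clique_deg_def by (simp add: sum_distrib_right distrib_left sum.distrib)
  then have lhs: "(\<Sum>u\<in>V. f u * clique_J V E w f u) = (\<Sum>u\<in>V. \<Sum>v\<in>V. ?A u v * (f u * (f u + f v)))"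
    by (simp add: sum_distrib_left mult_ac)
  \<comment> \<open>Symmetrizing in u and v turns f u (f u + f v) into (f u + f v)^2 / 2.\<close>
  have swapped: "(\<Sum>u\<in>V. \<Sum>v\<in>V. ?A u v * (f u * (f u + f v)))
      = (\<Sum>u\<in>V. \<Sum>v\<in>V. ?A u v * (f v * (f u + f v)))"
    by (subst sum.swap) (simp add: clique_adj_sym add.commute)
  have "2 * (\<Sum>u\<in>V. f u * clique_J V E w f u)
      = (\<Sum>u\<in>V. \<Sum>v\<in>V. ?A u v * (f u * (f u + f v))) + (\<Sum>u\<in>V. \<Sum>v\<in>V. ?A u v * (f v * (f u + f v)))"
    using lhs swapped by simp
  also have "\<dots> = (\<Sum>u\<in>V. \<Sum>v\<in>V. ?A u v * (f u + f v)\<^sup>2)"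
    by (simp only: sum.distrib[symmetric]) (simp add: power2_eq_square algebra_simps)
  also have "\<dots> = (\<Sum>e\<in>E. w e / (real (card e) - 1) * clique_energy f e)"
    unfolding clique_energy_def by (rule sum_clique_adj_pairs[OF assms])
  finally show ?thesis by simp
qed

section \<open>The clique energy of a hyperedge\<close>

lemma sq_add_between:
  fixes m x M :: real
  shows "(M + x)\<^sup>2 + (m + x)\<^sup>2 = (M + m)\<^sup>2 + 4 * x\<^sup>2 + 2 * ((M - x) * (x - m))"
  by (simp add: power2_eq_square algebra_simps)

lemma clique_energy_lower_bound:
  assumes "finite e" "a \<in> e" "b \<in> e" "a \<noteq> b"
  shows "2 * (f a + f b)\<^sup>2 + 2 * (\<Sum>v\<in>e - {a, b}. (f a + f v)\<^sup>2 + (f b + f v)\<^sup>2) \<le> clique_energy f e"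
proof -
  define R where "R = e - {a, b}"
  define row where "row u = (\<Sum>v\<in>e - {u}. (f u + f v)\<^sup>2)" for u
  have R: "finite R" "a \<notin> R" "b \<notin> R"
    using assms(1) unfolding R_def by auto
  have "e = insert a (insert b R)"
    using assms(2,3) unfolding R_def by auto
  then have "sum row e = row a + row b + sum row R"
    using R assms(4) by (simp add: add.assoc)
  then have energy: "clique_energy f e = row a + row b + sum row R"
    by (simp add: clique_energy_def row_def)
  have "e - {a} = insert b R" "e - {b} = insert a R"
    using assms(2-4) unfolding R_def by auto
  then have "row a = (f a + f b)\<^sup>2 + (\<Sum>v\<in>R. (f a + f v)\<^sup>2)"
    and "row b = (f a + f b)\<^sup>2 + (\<Sum>v\<in>R. (f b + f v)\<^sup>2)"
    using R by (simp_all add: row_def add.commute)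
  moreover have "(f a + f v)\<^sup>2 + (f b + f v)\<^sup>2 \<le> row v" if "v \<in> R" for v
  proof -
    have "{a, b} \<subseteq> e - {v}" using that assms(2,3) R by auto
    then have "(\<Sum>x\<in>{a, b}. (f v + f x)\<^sup>2) \<le> row v"
      unfolding row_def using assms(1) by (intro sum_mono2) auto
    then show ?thesis using assms(4) by (simp add: add.commute)
  qed
  then have "(\<Sum>v\<in>R. (f a + f v)\<^sup>2 + (f b + f v)\<^sup>2) \<le> sum row R"
    by (rule sum_mono)
  ultimately show ?thesis
    unfolding energy R_def[symmetric] by (simp add: sum.distrib)
qed

lemma two_le_card_obtains_distinct:
  assumes "finite e" "2 \<le> card e"
  obtains x y where "x \<in> e" "y \<in> e" "x \<noteq> y"
proof -
  have "\<not> card e \<le> Suc 0" using assms(2) by simp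
  then show thesis using that card_le_Suc0_iff_eq[OF assms(1)] by blast
qed

lemma hDelta_extremal_pair:
  fixes f :: "'a \<Rightarrow> real"
  assumes "finite e" "2 \<le> card e"
  obtains a b where "a \<in> e" "b \<in> e" "a \<noteq> b" "\<forall>x\<in>e. f b \<le> f x \<and> f x \<le> f a"
    "hDelta f e = f a + f b"
proof -
  obtain x y where xy: "x \<in> e" "y \<in> e" "x \<noteq> y"
    using two_le_card_obtains_distinct[OF assms] .
  have "Max (f ` e) \<in> f ` e"
    using assms(1) xy by (intro Max_in) auto
  then obtain a where a: "a \<in> e" "Max (f ` e) = f a" by auto
  have "e - {a} \<noteq> {}" using xy by auto
  then have "Min (f ` (e - {a})) \<in> f ` (e - {a})"
    using assms(1) by (intro Min_in) auto
  then obtain b where b: "b \<in> e - {a}" "Min (f ` (e - {a})) = f b" by auto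
  have le_a: "f x \<le> f a" if "x \<in> e" for x
    using Max_ge[of "f ` e" "f x"] that a assms(1) by simp
  have b_le: "f b \<le> f x" if "x \<in> e - {a}" for x
    using Min_le[of "f ` (e - {a})" "f x"] that b assms(1) by simp
  have "f b \<le> f x" if "x \<in> e" for x
    using that le_a b_le b(1) by (cases "x = a") auto
  then have bounds: "\<forall>x\<in>e. f b \<le> f x \<and> f x \<le> f a"
    using le_a by blast
  then have "Max (f ` e) = f a" "Min (f ` e) = f b"
    using a b assms(1) by (auto intro!: Min_eqI)
  then have "hDelta f e = f a + f b" by (simp add: hDelta_def)
  then show ?thesis using that a b bounds by blast
qed

lemma clique_energy_excess:
  fixes f :: "'a \<Rightarrow> real"
  assumes "finite e" "2 \<le> card e"
  obtains a b where "a \<in> e" "b \<in> e" "a \<noteq> b"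
    "\<forall>v\<in>e - {a, b}. 0 \<le> (f a - f v) * (f v - f b)"
    "2 * (real (card e) - 1) * (hDelta f e)\<^sup>2
       + 2 * (\<Sum>v\<in>e - {a, b}. 4 * (f v)\<^sup>2 + 2 * ((f a - f v) * (f v - f b))) \<le> clique_energy f e"
proof -
  obtain a b where ab: "a \<in> e" "b \<in> e" "a \<noteq> b" and bounds: "\<forall>x\<in>e. f b \<le> f x \<and> f x \<le> f a"
    and hD: "hDelta f e = f a + f b"
    by (rule hDelta_extremal_pair[OF assms])
  let ?R = "e - {a, b}"
  let ?\<epsilon> = "\<lambda>v. 4 * (f v)\<^sup>2 + 2 * ((f a - f v) * (f v - f b))"
  have "real (card ?R) = real (card e) - 2"
    using ab assms by (simp add: card_Diff_subset)
  moreover have "(\<Sum>v\<in>?R. (f a + f v)\<^sup>2 + (f b + f v)\<^sup>2) = (\<Sum>v\<in>?R. (f a + f b)\<^sup>2 + ?\<epsilon> v)"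
    by (intro sum.cong refl) (simp add: sq_add_between)
  ultimately have "(\<Sum>v\<in>?R. (f a + f v)\<^sup>2 + (f b + f v)\<^sup>2) = (real (card e) - 2) * (f a + f b)\<^sup>2 + sum ?\<epsilon> ?R"
    by (simp add: sum.distrib)
  then have "2 * (real (card e) - 1) * (hDelta f e)\<^sup>2 + 2 * sum ?\<epsilon> ?R \<le> clique_energy f e"
    using clique_energy_lower_bound[OF assms(1) ab, of f] unfolding hD by (simp add: algebra_simps)
  moreover have "\<forall>v\<in>?R. 0 \<le> (f a - f v) * (f v - f b)"
    using bounds by (auto intro!: mult_nonneg_nonneg)
  ultimately show ?thesis using that ab by blast
qed

lemma clique_energy_ge_hDelta:
  fixes f :: "'a \<Rightarrow> real"
  assumes "finite e" "2 \<le> card e"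
  shows "2 * (real (card e) - 1) * (hDelta f e)\<^sup>2 \<le> clique_energy f e"
proof -
  obtain a b where nonneg: "\<forall>v\<in>e - {a, b}. 0 \<le> (f a - f v) * (f v - f b)"
    and excess: "2 * (real (card e) - 1) * (hDelta f e)\<^sup>2
       + 2 * (\<Sum>v\<in>e - {a, b}. 4 * (f v)\<^sup>2 + 2 * ((f a - f v) * (f v - f b))) \<le> clique_energy f e"
    by (rule clique_energy_excess[OF assms])
  have "0 \<le> (\<Sum>v\<in>e - {a, b}. 4 * (f v)\<^sup>2 + 2 * ((f a - f v) * (f v - f b)))"
    using nonneg by (intro sum_nonneg) auto
  then show ?thesis using excess by linarith
qed

lemma clique_energy_eq_hDelta_imp_mult_eq_0:
  fixes f :: "'a \<Rightarrow> real"
  assumes "finite e" "3 \<le> card e"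
    and eq: "clique_energy f e = 2 * (real (card e) - 1) * (hDelta f e)\<^sup>2"
    and "u \<in> e" "v \<in> e" "u \<noteq> v"
  shows "f u * f v = 0"
proof -
  have "2 \<le> card e" using assms(2) by simp
  then obtain a b where ab: "a \<in> e" "b \<in> e" "a \<noteq> b"
    and nonneg: "\<forall>v\<in>e - {a, b}. 0 \<le> (f a - f v) * (f v - f b)"
    and excess: "2 * (real (card e) - 1) * (hDelta f e)\<^sup>2
       + 2 * (\<Sum>v\<in>e - {a, b}. 4 * (f v)\<^sup>2 + 2 * ((f a - f v) * (f v - f b))) \<le> clique_energy f e"
    by (rule clique_energy_excess[OF assms(1)])
  have terms_nonneg: "\<forall>v\<in>e - {a, b}. 0 \<le> 4 * (f v)\<^sup>2 + 2 * ((f a - f v) * (f v - f b))"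
    using nonneg by auto
  then have "0 \<le> (\<Sum>v\<in>e - {a, b}. 4 * (f v)\<^sup>2 + 2 * ((f a - f v) * (f v - f b)))"
    by (intro sum_nonneg) auto
  then have "(\<Sum>v\<in>e - {a, b}. 4 * (f v)\<^sup>2 + 2 * ((f a - f v) * (f v - f b))) = 0"
    using excess eq by linarith
  then have terms_zero: "\<forall>v\<in>e - {a, b}. 4 * (f v)\<^sup>2 + 2 * ((f a - f v) * (f v - f b)) = 0"
    using sum_nonneg_eq_0_iff[of "e - {a, b}" "\<lambda>v. 4 * (f v)\<^sup>2 + 2 * ((f a - f v) * (f v - f b))"]
      terms_nonneg assms(1) by blast
  have R0: "f v = 0 \<and> f a * f b = 0" if "v \<in> e - {a, b}" for v
  proof -
    have "4 * (f v)\<^sup>2 + 2 * ((f a - f v) * (f v - f b)) = 0" "0 \<le> (f a - f v) * (f v - f b)"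
      using that terms_zero nonneg by auto
    then have "(f v)\<^sup>2 = 0" "(f a - f v) * (f v - f b) = 0"
      using zero_le_power2[of "f v"] by linarith+
    then show ?thesis by simp
  qed
  have "card (e - {a, b}) > 0"
    using ab assms(1,2) by (simp add: card_Diff_subset)
  then have "f a * f b = 0"
    using R0 by (metis card.empty ex_in_conv less_irrefl)
  show ?thesis
  proof (cases "u \<in> e - {a, b} \<or> v \<in> e - {a, b}")
    case True
    then show ?thesis using R0 by auto
  next
    case False
    then have "(u = a \<and> v = b) \<or> (u = b \<and> v = a)"
      using assms(4-6) by auto
    then show ?thesis using \<open>f a * f b = 0\<close> by (auto simp: mult.commute)
  qed
qed

lemma clique_quad_minus_hyp_JH_quad:
  assumes "finite V" "finite E" "\<forall>e\<in>E. e \<subseteq> V" "\<forall>e\<in>E. 2 \<le> card e"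
  shows "(\<Sum>u\<in>V. f u * clique_J V E w f u) - hyp_JH_quad E w f
       = (\<Sum>e\<in>E. w e / (2 * (real (card e) - 1))
            * (clique_energy f e - 2 * (real (card e) - 1) * (hDelta f e)\<^sup>2))"
proof -
  have "w e / (real (card e) - 1) * clique_energy f e / 2 - w e * (hDelta f e)\<^sup>2
      = w e / (2 * (real (card e) - 1)) * (clique_energy f e - 2 * (real (card e) - 1) * (hDelta f e)\<^sup>2)"
    if "e \<in> E" for e
  proof -
    have "real (card e) - 1 \<noteq> 0" using that assms(4) by fastforce
    then show ?thesis by (simp add: field_simps)
  qed
  then show ?thesis
    unfolding clique_quad_eq_energy[OF assms(1-3)] hyp_JH_quad_def
    by (simp add: sum_divide_distrib flip: sum_subtractf)
qed

lemma clique_excess_term_nonneg: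
  assumes "finite e" "2 \<le> card e" "0 < w e"
  shows "0 \<le> w e / (2 * (real (card e) - 1))
            * (clique_energy f e - 2 * (real (card e) - 1) * (hDelta f e)\<^sup>2)"
  using clique_energy_ge_hDelta[OF assms(1,2), of f] assms(2,3) by simp

lemma hyp_JH_quad_le_clique_quad:
  assumes "finite V" "finite E" "\<forall>e\<in>E. e \<subseteq> V" "\<forall>e\<in>E. 0 < w e" "\<forall>e\<in>E. 2 \<le> card e"
  shows "hyp_JH_quad E w f \<le> (\<Sum>u\<in>V. f u * clique_J V E w f u)"
proof -
  have "0 \<le> (\<Sum>u\<in>V. f u * clique_J V E w f u) - hyp_JH_quad E w f"
    unfolding clique_quad_minus_hyp_JH_quad[OF assms(1-3,5)] using assms
    by (intro sum_nonneg clique_excess_term_nonneg) (auto intro: finite_subset)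
  then show ?thesis by simp
qed

lemma hyp_JH_quad_eq_clique_quad_imp_mult_eq_0:
  assumes "finite V" "finite E" "\<forall>e\<in>E. e \<subseteq> V" "\<forall>e\<in>E. 0 < w e" "\<forall>e\<in>E. 2 < card e"
    and "hyp_JH_quad E w f = (\<Sum>u\<in>V. f u * clique_J V E w f u)"
  shows "\<forall>e\<in>E. \<forall>u\<in>e. \<forall>v\<in>e. u \<noteq> v \<longrightarrow> f u * f v = 0"
proof (intro ballI impI)
  fix e u v assume "e \<in> E" "u \<in> e" "v \<in> e" "u \<noteq> v"
  have rank2: "\<forall>e\<in>E. 2 \<le> card e" using assms(5) by auto
  have fin: "finite e" if "e \<in> E" for e using that assms(1,3) finite_subset by blast
  let ?term = "\<lambda>e. w e / (2 * (real (card e) - 1))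
                 * (clique_energy f e - 2 * (real (card e) - 1) * (hDelta f e)\<^sup>2)"
  have "(\<Sum>e\<in>E. ?term e) = 0"
    using clique_quad_minus_hyp_JH_quad[OF assms(1-3) rank2, of f w] assms(6) by simp
  moreover have "\<forall>e\<in>E. 0 \<le> ?term e"
    using clique_excess_term_nonneg fin rank2 assms(4) by blast
  ultimately have "?term e = 0"
    using sum_nonneg_eq_0_iff[OF assms(2), of ?term] \<open>e \<in> E\<close> by blast
  moreover have "0 < w e / (2 * (real (card e) - 1))"
    using assms(4,5) \<open>e \<in> E\<close> by fastforce
  ultimately have "clique_energy f e - 2 * (real (card e) - 1) * (hDelta f e)\<^sup>2 = 0"
    by (metis less_irrefl mult_eq_0_iff)
  then have "clique_energy f e = 2 * (real (card e) - 1) * (hDelta f e)\<^sup>2"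
    by linarith
  then show "f u * f v = 0"
    using clique_energy_eq_hDelta_imp_mult_eq_0[OF fin[OF \<open>e \<in> E\<close>]] assms(5) \<open>e \<in> E\<close>
      \<open>u \<in> e\<close> \<open>v \<in> e\<close> \<open>u \<noteq> v\<close> by fastforce
qed

section \<open>The smallest eigenvalue of the clique reduction\<close>

definition clique_kernel :: "'a set \<Rightarrow> 'a set set \<Rightarrow> ('a set \<Rightarrow> real) \<Rightarrow> 'a \<Rightarrow> 'a \<Rightarrow> real" where
  "clique_kernel V E w u v = (if u = v then clique_deg V E w u else 0) + clique_adj E w u v"

lemma kernel_op_clique_kernel:
  assumes "finite V" "u \<in> V"
  shows "kernel_op V (clique_kernel V E w) f u = clique_J V E w f u"
proof -
  have "(\<Sum>v\<in>V. (if u = v then clique_deg V E w u else 0) * f v) = clique_deg V E w u * f u"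
    using assms by (simp add: if_distrib[of "\<lambda>x. x * _"] cong: if_cong)
  then show ?thesis
    by (simp add: kernel_op_def clique_kernel_def clique_J_def distrib_right sum.distrib)
qed

lemma is_eigvec_clique_DinvJ_iff:
  assumes "finite V" "\<forall>v\<in>V. 0 < clique_deg V E w v"
  shows "is_eigvec V (clique_DinvJ V E w) \<mu> g \<longleftrightarrow>
    (\<exists>v\<in>V. g v \<noteq> 0) \<and> (\<forall>u\<in>V. clique_J V E w g u = \<mu> * (clique_deg V E w u * g u))"
proof -
  have "clique_J V E w g u / clique_deg V E w u = \<mu> * g u
      \<longleftrightarrow> clique_J V E w g u = \<mu> * (clique_deg V E w u * g u)" if "u \<in> V" for u
    using assms(2) that by (auto simp: divide_eq_eq mult_ac)
  then show ?thesis
    by (auto simp: is_eigvec_def clique_DinvJ_def)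
qed

lemma clique_DinvJ_has_eigenvalue_lt_1:
  assumes finV: "finite V" and finE: "finite E" and edges: "\<forall>e\<in>E. e \<subseteq> V"
    and wpos: "\<forall>e\<in>E. 0 < w e" and rank2: "\<forall>e\<in>E. 2 \<le> card e"
    and Dpos: "\<forall>v\<in>V. 0 < clique_deg V E w v" and "E \<noteq> {}"
  shows "\<exists>\<mu> g. is_eigvec V (clique_DinvJ V E w) \<mu> g \<and> \<mu> < 1"
proof -
  let ?D = "clique_deg V E w" and ?A = "clique_adj E w"
  obtain e where "e \<in> E" using \<open>E \<noteq> {}\<close> by blast
  have "finite e" using \<open>e \<in> E\<close> edges finV finite_subset by blast
  then obtain a b where ab: "a \<in> e" "b \<in> e" "a \<noteq> b"
    using two_le_card_obtains_distinct rank2 \<open>e \<in> E\<close> by blast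
  have "a \<in> V" "b \<in> V" using ab \<open>e \<in> E\<close> edges by auto
  have "symmetric": "\<forall>u\<in>V. \<forall>v\<in>V. clique_kernel V E w u v = clique_kernel V E w v u"
    by (simp add: clique_kernel_def clique_adj_sym)
  have "V \<noteq> {}" using \<open>a \<in> V\<close> by blast
  obtain \<mu> g where g: "\<exists>v\<in>V. g v \<noteq> 0" "\<forall>u\<in>V. kernel_op V (clique_kernel V E w) g u = \<mu> * (?D u * g u)"
    and min: "\<forall>h. \<mu> * (\<Sum>v\<in>V. ?D v * (h v)\<^sup>2) \<le> quad_form V (clique_kernel V E w) h"
    by (rule symmetric_kernel_min_eigenpair[OF finV \<open>V \<noteq> {}\<close> Dpos "symmetric"])
  have "is_eigvec V (clique_DinvJ V E w) \<mu> g"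
    using g finV Dpos by (simp add: is_eigvec_clique_DinvJ_iff kernel_op_clique_kernel)
  moreover have "\<mu> < 1"
  proof -
    let ?h = "\<lambda>x. (if x = a then 1 else 0) - (if x = b then 1 else (0::real))"
    have "quad_form V (clique_kernel V E w) ?h = ?D a + ?D b - 2 * ?A a b"
      using quad_form_delta_diff[OF finV \<open>a \<in> V\<close> \<open>b \<in> V\<close> "symmetric"] ab
      by (simp add: clique_kernel_def[abs_def])
    then have "\<mu> * (?D a + ?D b) \<le> ?D a + ?D b - 2 * ?A a b"
      using min[rule_format, of ?h] weighted_sum_sq_delta_diff[OF finV \<open>a \<in> V\<close> \<open>b \<in> V\<close> ab(3)]
      by simp
    moreover have "0 < ?A a b"
      using clique_adj_pos[OF finE \<open>e \<in> E\<close> ab wpos rank2] .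
    ultimately have "\<mu> * (?D a + ?D b) < ?D a + ?D b"
      by linarith
    moreover have "0 < ?D a + ?D b"
      using Dpos \<open>a \<in> V\<close> \<open>b \<in> V\<close> by (simp add: add_pos_pos)
    ultimately show ?thesis
      by (simp add: mult_less_cancel_right2)
  qed
  ultimately show ?thesis by blast
qed

lemma clique_adj_mult_eq_0:
  assumes "\<forall>e\<in>E. \<forall>u\<in>e. \<forall>v\<in>e. u \<noteq> v \<longrightarrow> f u * f v = 0"
  shows "clique_adj E w u v * (f u * f v) = 0"
proof (cases "\<exists>e\<in>E. u \<in> e \<and> v \<in> e \<and> u \<noteq> v")
  case True
  then show ?thesis using assms by auto
next
  case False
  then have "clique_adj E w u v = 0"
    unfolding clique_adj_def by (auto intro: sum.neutral)
  then show ?thesis by simp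
qed

lemma clique_eigenvalue_eq_1_if_edge_products_eq_0:
  assumes "finite V" "\<forall>v\<in>V. 0 < clique_deg V E w v"
    and eig: "is_eigvec V (clique_DinvJ V E w) lam f"
    and "\<forall>e\<in>E. \<forall>u\<in>e. \<forall>v\<in>e. u \<noteq> v \<longrightarrow> f u * f v = 0"
  shows "lam = 1"
proof -
  let ?D = "clique_deg V E w"
  obtain u where "u \<in> V" "f u \<noteq> 0" and Jf: "clique_J V E w f u = lam * (?D u * f u)"
    using eig assms(1,2) by (auto simp: is_eigvec_clique_DinvJ_iff)
  have "f u * clique_J V E w f u = ?D u * (f u)\<^sup>2 + (\<Sum>v\<in>V. clique_adj E w u v * (f u * f v))"
    by (simp add: clique_J_def distrib_left sum_distrib_left power2_eq_square mult_ac)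
  also have "\<dots> = ?D u * (f u)\<^sup>2"
    using clique_adj_mult_eq_0[OF assms(4)] by (simp only: sum.neutral_const add_0_right)
  finally have "lam * (?D u * (f u)\<^sup>2) = ?D u * (f u)\<^sup>2"
    by (simp add: Jf power2_eq_square mult_ac)
  moreover have "0 < ?D u"
    using \<open>u \<in> V\<close> assms(2) by blast
  then have "?D u * (f u)\<^sup>2 \<noteq> 0"
    using \<open>f u \<noteq> 0\<close> by simp
  ultimately show ?thesis by simp
qed

theorem lemma8:
  fixes V :: "'a set" and E :: "'a set set" and w :: "'a set \<Rightarrow> real"
    and f :: "'a \<Rightarrow> real" and lam1 :: real
  assumes finV: "finite V" and finE: "finite E"
    and edges: "\<forall>e\<in>E. e \<subseteq> V"
    and wpos: "\<forall>e\<in>E. w e > 0"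
    and rank2: "\<forall>e\<in>E. card e \<ge> 2"
    and degpos: "\<forall>v\<in>V. hdeg E w v > 0"
    and eig: "is_eigvec V (clique_DinvJ V E w) lam1 f"
    and smallest: "\<forall>mu g. is_eigvec V (clique_DinvJ V E w) mu g \<longrightarrow> lam1 \<le> mu"
  shows "hyp_JH_quad E w f / hyp_DH_quad V E w f \<le> lam1
       \<and> ((\<forall>e\<in>E. card e > 2) \<longrightarrow> hyp_JH_quad E w f / hyp_DH_quad V E w f < lam1)"
proof -
  have D: "clique_deg V E w = hdeg E w"
    using clique_deg_eq_hdeg[OF finV finE edges rank2] by blast
  then have Dpos: "\<forall>v\<in>V. 0 < clique_deg V E w v" using degpos by simp
  have "\<forall>u\<in>V. clique_J V E w f u = lam1 * (hdeg E w u * f u)"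
    using eig by (simp add: is_eigvec_clique_DinvJ_iff[OF finV Dpos] D)
  then have quad: "(\<Sum>u\<in>V. f u * clique_J V E w f u) = lam1 * hyp_DH_quad V E w f"
    by (simp add: hyp_DH_quad_def sum_distrib_left power2_eq_square mult_ac)
  have "0 < hyp_DH_quad V E w f"
    using weighted_sum_sq_pos[OF finV degpos] eig unfolding hyp_DH_quad_def is_eigvec_def by blast
  moreover have le: "hyp_JH_quad E w f \<le> lam1 * hyp_DH_quad V E w f"
    unfolding quad[symmetric] by (rule hyp_JH_quad_le_clique_quad[OF finV finE edges wpos rank2])
  moreover have "hyp_JH_quad E w f < lam1 * hyp_DH_quad V E w f" if rank3: "\<forall>e\<in>E. 2 < card e"
  proof -
    have "E \<noteq> {}"
      using eig degpos by (auto simp: is_eigvec_def hdeg_def)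
    then obtain \<mu> g where "is_eigvec V (clique_DinvJ V E w) \<mu> g" "\<mu> < 1"
      using clique_DinvJ_has_eigenvalue_lt_1[OF finV finE edges wpos rank2 Dpos] by blast
    then have "lam1 \<noteq> 1"
      using smallest by fastforce
    then have "\<not> (\<forall>e\<in>E. \<forall>u\<in>e. \<forall>v\<in>e. u \<noteq> v \<longrightarrow> f u * f v = 0)"
      using clique_eigenvalue_eq_1_if_edge_products_eq_0[OF finV Dpos eig] by blast
    then have "hyp_JH_quad E w f \<noteq> (\<Sum>u\<in>V. f u * clique_J V E w f u)"
      using hyp_JH_quad_eq_clique_quad_imp_mult_eq_0[OF finV finE edges wpos rank3] by blast
    then show ?thesis using le quad by linarith
  qed
  ultimately show ?thesis
    by (simp add: pos_divide_le_eq pos_divide_less_eq)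
qed

end
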